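(* Fix $v\ge0$. Then the function $x\mapsto d_H((0,1),(x,v))$ is strictly increasing on $[0,\infty)$.
   Context: Let $\mathcal{H}=\{(x,v)\in\mathbb{R}^2:v\ge0\}$ and $d_H$ the Riemannian distance on $\mathcal{H}$ induced by the metric $ds^2=v^{-1}(dx^2+dv^2)$ on the open upper half-plane (extended to the boundary $v=0$). *)

theory Defs
  imports "HOL-Analysis.Analysis"
begin

definition HP :: "(real \<times> real) set" where
  "HP = {p. snd p \<ge> 0}"

text \<open>Length density of the metric ds^2 = v^{-1}(dx^2 + dv^2) at point p with velocity d.
  On the boundary v = 0 the density is infinite unless the velocity vanishes
  (extension of the metric to the boundary).\<close>
definition hdens :: "real \<times> real \<Rightarrow> real \<times> real \<Rightarrow> ennreal" where
  "hdens p d = (if snd p > 0 then ennreal (sqrt ((fst d ^ 2 + snd d ^ 2) / snd p))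
               else if d = 0 then 0 else \<infinity>)"

definition hlength :: "(real \<Rightarrow> real \<times> real) \<Rightarrow> ennreal" where
  "hlength g = (\<integral>\<^sup>+ t. hdens (g t) (vector_derivative g (at t)) * indicator {0..1} t \<partial>lborel)"

definition hpaths :: "real \<times> real \<Rightarrow> real \<times> real \<Rightarrow> (real \<Rightarrow> real \<times> real) set" where
  "hpaths p q = {g. g piecewise_C1_differentiable_on {0..1} \<and> g ` {0..1} \<subseteq> HP
                     \<and> g 0 = p \<and> g 1 = q}"

definition dH :: "real \<times> real \<Rightarrow> real \<times> real \<Rightarrow> real" where
  "dH p q = enn2real (INF g \<in> hpaths p q. hlength g)"

end

theory Submission
  imports Defs
begin

text \<open>Compressing a path from \<open>(0,1)\<close> to \<open>(x',v)\<close> horizontally by the factor \<open>c = x/x' < 1\<close> gives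
  a path to \<open>(x,v)\<close>. At a point of height \<open>V \<le> K\<^sup>2\<close> with velocity \<open>(a,b)\<close> its speed is smaller by a
  definite amount:
  \<open>\<surd>((c\<^sup>2a\<^sup>2 + b\<^sup>2)/V) + (1-c) l \<bar>a\<bar>/K \<le> (1 + (1-c) l\<^sup>2/2) \<surd>((a\<^sup>2 + b\<^sup>2)/V)\<close> for every \<open>l > 0\<close>.
  Along a path of length at most \<open>B\<close> the height is bounded, since the length dominates the
  change of \<open>2\<surd>(1 + V)\<close>, and the horizontal speed integrates to at least \<open>x'\<close>. For \<open>l\<close> small
  the gain \<open>(1-c) l x'/K\<close> beats the loss \<open>(1-c) l\<^sup>2 B/2\<close>, so all nearly minimising paths to
  \<open>(x',v)\<close> are compressed into paths to \<open>(x,v)\<close> that are shorter by a fixed \<open>\<delta> > 0\<close>.\<close>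

text \<open>Unlike \<open>nn_integral_add\<close> and \<open>nn_integral_cmult\<close>, the next two estimates need no
  measurability: the length density of a path is not known to be measurable.\<close>

lemma nn_integral_add_le:
  "integral\<^sup>N M f + integral\<^sup>N M g \<le> (\<integral>\<^sup>+x. f x + g x \<partial>M)"
proof -
  let ?S = "\<lambda>h. {s. simple_function M s \<and> s \<le> h}"
  have ne: "?S h \<noteq> {}" for h :: "_ \<Rightarrow> ennreal"
    using simple_function_const[of M 0] by (auto simp: le_fun_def)
  have "integral\<^sup>N M f + integral\<^sup>N M g = (SUP a\<in>?S f. SUP b\<in>?S g. integral\<^sup>S M a + integral\<^sup>S M b)"
    unfolding nn_integral_def
    by (simp add: ennreal_SUP_add_left[OF ne, symmetric] ennreal_SUP_add_right[OF ne, symmetric])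
  also have "\<dots> \<le> (\<integral>\<^sup>+x. f x + g x \<partial>M)"
  proof (intro SUP_least)
    fix a b assume a: "a \<in> ?S f" and b: "b \<in> ?S g"
    then have "integral\<^sup>S M a + integral\<^sup>S M b = (\<integral>\<^sup>Sx. a x + b x \<partial>M)"
      by (subst simple_integral_add) auto
    also have "\<dots> \<le> (\<integral>\<^sup>+x. f x + g x \<partial>M)"
      unfolding nn_integral_def
      by (rule SUP_upper) (use a b in \<open>auto simp: le_fun_def intro: add_mono\<close>)
    finally show "integral\<^sup>S M a + integral\<^sup>S M b \<le> (\<integral>\<^sup>+x. f x + g x \<partial>M)" .
  qed
  finally show ?thesis .
qed

lemma nn_integral_cmult_le:
  assumes "c \<noteq> 0" "c \<noteq> top"
  shows "(\<integral>\<^sup>+x. c * f x \<partial>M) \<le> c * integral\<^sup>N M f"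
  unfolding nn_integral_def
proof (intro SUP_least)
  fix s assume s: "s \<in> {s. simple_function M s \<and> s \<le> (\<lambda>x. c * f x)}"
  define t where "t x = inverse c * s x" for x
  have c_inverse: "c * inverse c = 1"
    using assms ennreal_divide_self[of c] by (simp add: divide_ennreal_def top.not_eq_extremum)
  have s_eq: "s = (\<lambda>x. c * t x)"
    using c_inverse by (simp add: t_def mult.assoc[symmetric])
  have t_simple: "simple_function M t" using s unfolding t_def by auto
  have "t x \<le> f x" for x
  proof -
    have "t x \<le> inverse c * (c * f x)"
      using s by (auto simp: t_def le_fun_def intro: mult_left_mono)
    also have "\<dots> = f x" using c_inverse by (simp add: mult.assoc[symmetric] mult.commute)
    finally show ?thesis .
  qed
  then have "integral\<^sup>S M t \<le> (SUP g\<in>{g. simple_function M g \<and> g \<le> f}. integral\<^sup>S M g)"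
    using t_simple by (intro SUP_upper) (auto simp: le_fun_def)
  then show "integral\<^sup>S M s \<le> c * (SUP g\<in>{g. simple_function M g \<and> g \<le> f}. integral\<^sup>S M g)"
    unfolding s_eq simple_integral_mult[OF t_simple] by (rule mult_left_mono) simp
qed

lemma fundamental_theorem_of_calculus_nn_integral_le:
  fixes h h' :: "real \<Rightarrow> real" and f :: "real \<Rightarrow> ennreal"
  assumes S: "finite S" and ab: "a \<le> b"
    and deriv: "\<And>t. t \<in> {a<..<b} - S \<Longrightarrow> (h has_real_derivative h' t) (at t)"
    and cont: "continuous_on {a..b} h"
    and bound: "\<And>t. t \<in> {a<..<b} - S \<Longrightarrow> ennreal \<bar>h' t\<bar> \<le> f t"
  shows "ennreal (h b - h a) \<le> (\<integral>\<^sup>+t. f t * indicator {a..b} t \<partial>lborel)"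
proof -
  define k where "k t = (if t \<in> {a<..<b} - S then h' t else 0)" for t
  have k_integral: "(k has_integral (h b - h a)) {a..b}"
    using deriv by (intro fundamental_theorem_of_calculus_interior_strong[OF S ab _ cont])
      (simp add: k_def has_real_derivative_iff_has_vector_derivative)
  define N where "N = (\<integral>\<^sup>+t. ennreal \<bar>k t\<bar> * indicator {a..b} t \<partial>lborel)"
  have "N \<le> (\<integral>\<^sup>+t. f t * indicator {a..b} t \<partial>lborel)"
    unfolding N_def by (intro nn_integral_mono) (auto simp: k_def indicator_def intro: bound)
  moreover have "ennreal (h b - h a) \<le> N"
  proof (cases N)
    case (real r)
    define F where "F t = \<bar>indicator {a..b} t *\<^sub>R k t\<bar>" for t
    have "F \<in> lebesgue \<rightarrow>\<^sub>M borel"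
      unfolding F_def
      using borel_measurable_abs[OF has_integral_implies_lebesgue_measurable[OF k_integral]] .
    moreover have "integral\<^sup>N lebesgue F = N"
      unfolding N_def F_def nn_integral_completion[of lborel, symmetric]
      by (intro nn_integral_cong) (simp add: indicator_def)
    ultimately have "(F has_integral r) UNIV"
      using real by (subst has_integral_iff_nn_integral_lebesgue) (auto simp: F_def)
    then have "((\<lambda>t. if t \<in> {a..b} then \<bar>k t\<bar> else 0) has_integral r) UNIV"
      by (rule has_integral_eq[rotated]) (simp add: F_def indicator_def)
    then have "((\<lambda>t. \<bar>k t\<bar>) has_integral r) {a..b}"
      by (rule has_integral_restrict_UNIV[THEN iffD1])
    then have "h b - h a \<le> r"
      by (rule has_integral_le[OF k_integral]) auto
    then show ?thesis using real by (simp add: ennreal_leI)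
  qed simp
  ultimately show ?thesis by (rule order_trans[rotated])
qed

lemma has_vector_derivative_fst:
  "(g has_vector_derivative D) F \<Longrightarrow> ((\<lambda>s. fst (g s)) has_vector_derivative fst D) F"
  unfolding has_vector_derivative_def by (drule has_derivative_fst) simp

lemma has_vector_derivative_snd:
  "(g has_vector_derivative D) F \<Longrightarrow> ((\<lambda>s. snd (g s)) has_vector_derivative snd D) F"
  unfolding has_vector_derivative_def by (drule has_derivative_snd) simp

lemma INF_add_le_INF_of_uniform_gain:
  fixes f :: "'a \<Rightarrow> 'c::{complete_linorder, dense_linorder, ordered_ab_semigroup_add}"
    and g :: "'b \<Rightarrow> 'c"
  assumes "(INF x\<in>A. f x) < B"
    and "\<And>x. x \<in> A \<Longrightarrow> f x < B \<Longrightarrow> \<exists>y\<in>A'. g y + \<delta> \<le> f x"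
  shows "(INF y\<in>A'. g y) + \<delta> \<le> (INF x\<in>A. f x)"
proof (rule dense_ge_bounded[OF assms(1)])
  fix w assume w: "(INF x\<in>A. f x) < w" "w < B"
  then obtain x where x: "x \<in> A" "f x < w" by (auto simp: INF_less_iff)
  with assms(2) w(2) obtain y where "y \<in> A'" "g y + \<delta> \<le> f x" by (meson order.strict_trans)
  then have "(INF y\<in>A'. g y) + \<delta> \<le> f x" by (meson INF_lower add_right_mono order_trans)
  with x show "(INF y\<in>A'. g y) + \<delta> \<le> w" by simp
qed

lemma sqrt_stretch_le:
  fixes a b c :: real
  assumes "0 \<le> c" "c \<le> 1"
  shows "sqrt ((c * a)^2 + b^2) \<le> (1 - c) * \<bar>b\<bar> + c * sqrt (a^2 + b^2)"
proof -
  have "sqrt ((c * a)^2 + b^2) = norm ((1 - c) *\<^sub>R (0::real, b) + c *\<^sub>R (a, b))"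
    by (simp add: norm_Pair algebra_simps)
  also have "\<dots> \<le> norm ((1 - c) *\<^sub>R (0::real, b)) + norm (c *\<^sub>R (a, b))"
    by (rule norm_triangle_ineq)
  also have "\<dots> = (1 - c) * \<bar>b\<bar> + c * sqrt (a^2 + b^2)"
    using assms by (simp only: norm_scaleR norm_Pair) simp
  finally show ?thesis .
qed

lemma mult_abs_le_sqrt_sum_squares:
  fixes a b l :: real
  assumes "0 < l"
  shows "l * \<bar>a\<bar> \<le> sqrt (a^2 + b^2) - \<bar>b\<bar> + l^2 * sqrt (a^2 + b^2) / 2"
proof (cases "a = 0")
  case False
  define s where "s = sqrt (a^2 + b^2)"
  have s: "s > 0" "s^2 = a^2 + b^2" using False by (simp_all add: s_def add_pos_nonneg)
  \<comment> \<open>AM-GM gives \<open>l \<bar>a\<bar> \<le> a\<^sup>2/(2s) + l\<^sup>2 s/2\<close>, and \<open>a\<^sup>2 = (s - \<bar>b\<bar>)(s + \<bar>b\<bar>) \<le> 2s(s - \<bar>b\<bar>)\<close>.\<close>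
  have "a^2 \<le> 2 * s * (s - \<bar>b\<bar>)"
    using s(2) zero_le_power2[of "s - \<bar>b\<bar>"] by (simp add: power2_eq_square algebra_simps)
  moreover have "2 * l * \<bar>a\<bar> * s \<le> l^2 * s^2 + a^2"
    using zero_le_power2[of "l * s - \<bar>a\<bar>"] by (simp add: power2_eq_square algebra_simps)
  ultimately have "s * (l * \<bar>a\<bar>) \<le> s * (s - \<bar>b\<bar> + l^2 * s / 2)"
    by (simp add: power2_eq_square algebra_simps)
  then show ?thesis using s(1) by (simp add: s_def)
qed simp

lemma horizontal_compression_gain:
  fixes a b V c l K :: real
  assumes V: "0 < V" "sqrt V \<le> K" and c: "0 \<le> c" "c < 1" and l: "0 < l"
  shows "sqrt (((c * a)^2 + b^2) / V) + (1 - c) * l / K * \<bar>a\<bar>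
           \<le> (1 + (1 - c) * l^2 / 2) * sqrt ((a^2 + b^2) / V)"
proof -
  define r s where "r = sqrt V" and "s = sqrt (a^2 + b^2)"
  have r: "0 < r" "r \<le> K" using V by (simp_all add: r_def)
  have "(1 - c) * l / K * \<bar>a\<bar> \<le> (1 - c) * (l * \<bar>a\<bar>) / r"
    using r c l by (simp add: frac_le mult_nonneg_nonneg)
  then have "sqrt ((c * a)^2 + b^2) / r + (1 - c) * l / K * \<bar>a\<bar>
               \<le> (sqrt ((c * a)^2 + b^2) + (1 - c) * (l * \<bar>a\<bar>)) / r"
    by (simp add: add_divide_distrib)
  also have "\<dots> \<le> ((1 - c) * \<bar>b\<bar> + c * s + (1 - c) * (s - \<bar>b\<bar> + l^2 * s / 2)) / r"
    using sqrt_stretch_le[of c a b] mult_abs_le_sqrt_sum_squares[OF l, of a b] c r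
    unfolding s_def by (intro divide_right_mono add_mono mult_left_mono) auto
  also have "\<dots> = (1 + (1 - c) * l^2 / 2) * s / r"
    by (simp add: algebra_simps)
  finally show ?thesis by (simp add: r_def s_def real_sqrt_divide)
qed

lemma hdens_ge_vertical_speed:
  assumes "snd p \<ge> 0"
  shows "ennreal (\<bar>snd d\<bar> / sqrt (1 + snd p)) \<le> hdens p d"
proof (cases "snd p > 0")
  case True
  have "\<bar>snd d\<bar> / sqrt (1 + snd p) \<le> \<bar>snd d\<bar> / sqrt (snd p)"
    using True by (intro divide_left_mono) auto
  also have "\<dots> = sqrt ((snd d)^2 / snd p)" by (simp add: real_sqrt_divide)
  also have "\<dots> \<le> sqrt (((fst d)^2 + (snd d)^2) / snd p)"
    using True by (intro real_sqrt_le_mono divide_right_mono) auto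
  finally show ?thesis using True by (simp add: hdens_def)
qed (use assms in \<open>auto simp: hdens_def\<close>)

lemma hdens_compress_gain:
  fixes c l K :: real
  assumes V: "snd p \<ge> 0" "sqrt (snd p) \<le> K" and c: "0 \<le> c" "c < 1" and l: "0 < l"
  shows "hdens (c * fst p, snd p) (c * fst d, snd d) + ennreal ((1 - c) * l / K * \<bar>fst d\<bar>)
           \<le> ennreal (1 + (1 - c) * l^2 / 2) * hdens p d"
proof (cases "snd p > 0")
  case True
  then have "K > 0" using V(2) by (meson less_le_trans real_sqrt_gt_zero)
  then have "0 \<le> (1 - c) * l / K * \<bar>fst d\<bar>" using c l by simp
  then show ?thesis
    using True c horizontal_compression_gain[OF True V(2) c l, of "fst d" "snd d"]
    by (simp add: hdens_def ennreal_plus[symmetric] ennreal_mult[symmetric] ennreal_leI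
        del: ennreal_plus)
next
  case False
  then show ?thesis
    using V c by (auto simp: hdens_def zero_prod_def ennreal_mult_top)
qed

lemma hpathsE:
  assumes "g \<in> hpaths p q"
  obtains S D where "finite S" "continuous_on {0..1} g" "g ` {0..1} \<subseteq> HP" "g 0 = p" "g 1 = q"
    "\<And>t. t \<in> {0..1} - S \<Longrightarrow> (g has_vector_derivative D t) (at t)"
    "continuous_on ({0..1} - S) D"
  using assms unfolding hpaths_def piecewise_C1_differentiable_on_def C1_differentiable_on_def
  by blast

lemma hpaths_snd_nonneg:
  "g \<in> hpaths p q \<Longrightarrow> t \<in> {0..1} \<Longrightarrow> 0 \<le> snd (g t)"
  by (auto simp: hpaths_def HP_def image_subset_iff)

text \<open>A path whose height has square root moving linearly from \<open>1\<close> to \<open>\<surd>v\<close>, and whose horizontal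
  speed vanishes at the endpoint as fast as \<open>1 - t \<le> \<surd>(height)\<close>; hence its speed is bounded.\<close>

definition model_path :: "real \<Rightarrow> real \<Rightarrow> real \<Rightarrow> real \<times> real" where
  "model_path x a t = (x * (1 - (1 - t)^2), (1 - t * (1 - a))^2)"

lemma model_path_has_vector_derivative:
  "(model_path x a has_vector_derivative (2 * x * (1 - t), - 2 * (1 - a) * (1 - t * (1 - a)))) (at t)"
  unfolding model_path_def
  by (rule has_vector_derivative_Pair; rule has_vector_derivative_eq_rhs;
      (rule derivative_eq_intros | simp add: has_real_derivative_iff_has_vector_derivative[symmetric])+;
      simp add: algebra_simps power2_eq_square)

lemma model_path_in_hpaths:
  assumes "0 \<le> a"
  shows "model_path x a \<in> hpaths (0, 1) (x, a^2)"
proof -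
  have "model_path x a C1_differentiable_on {0..1}"
    unfolding C1_differentiable_on_def
  proof (intro exI conjI ballI)
    show "continuous_on {0..1} (\<lambda>t. (2 * x * (1 - t), - 2 * (1 - a) * (1 - t * (1 - a))))"
      by (intro continuous_intros)
    show "(model_path x a has_vector_derivative (2 * x * (1 - t), - 2 * (1 - a) * (1 - t * (1 - a))))
            (at t)" for t
      by (rule model_path_has_vector_derivative)
  qed
  then have "model_path x a piecewise_C1_differentiable_on {0..1}"
    by (rule C1_differentiable_imp_piecewise)
  moreover have "model_path x a ` {0..1} \<subseteq> HP"
    by (auto simp: HP_def model_path_def)
  ultimately show ?thesis
    using assms by (simp add: hpaths_def model_path_def)
qed

lemma hdens_model_path_le:
  assumes a: "0 \<le> a" and t: "t \<in> {0..1}"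
  shows "hdens (model_path x a t) (vector_derivative (model_path x a) (at t))
           \<le> ennreal (sqrt (4 * x^2 + 4 * (1 - a)^2))"
proof -
  define s where "s = 1 - t * (1 - a)"
  define D where "D = (2 * x * (1 - t), - 2 * (1 - a) * s)"
  have D: "vector_derivative (model_path x a) (at t) = D"
    using model_path_has_vector_derivative unfolding D_def s_def by (rule vector_derivative_at)
  have s: "1 - t \<le> s" "0 \<le> 1 - t" using a t by (auto simp: s_def right_diff_distrib)
  have snd: "snd (model_path x a t) = s^2" by (simp add: model_path_def s_def)
  show ?thesis
  proof (cases "s = 0")
    case False
    then have "0 < s" using s by linarith
    then have "(1 - t)^2 / s^2 \<le> 1" using s by (simp add: power_mono)
    then have "4 * x^2 * ((1 - t)^2 / s^2) \<le> 4 * x^2 * 1"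
      by (intro mult_left_mono) simp_all
    then have "4 * x^2 * ((1 - t)^2 / s^2) + 4 * (1 - a)^2 \<le> 4 * x^2 + 4 * (1 - a)^2"
      by simp
    moreover have "((fst D)^2 + (snd D)^2) / s^2 = 4 * x^2 * ((1 - t)^2 / s^2) + 4 * (1 - a)^2"
      using \<open>0 < s\<close> by (simp add: D_def power2_eq_square field_simps)
    ultimately show ?thesis
      using \<open>0 < s\<close> by (simp add: hdens_def D snd ennreal_leI)
  next
    case True
    \<comment> \<open>the path only reaches the boundary \<open>v = 0\<close> at its endpoint, with zero velocity\<close>
    then have "D = 0" using s by (simp add: D_def zero_prod_def)
    then show ?thesis by (simp add: hdens_def D)
  qed
qed

lemma hpaths_finite_length:
  assumes "0 \<le> v"
  shows "\<exists>g\<in>hpaths (0, 1) (x, v). hlength g < \<infinity>"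
proof
  let ?a = "sqrt v" and ?C = "sqrt (4 * x^2 + 4 * (1 - sqrt v)^2)"
  show "model_path x ?a \<in> hpaths (0, 1) (x, v)"
    using model_path_in_hpaths[of ?a x] assms by simp
  have "hlength (model_path x ?a) \<le> (\<integral>\<^sup>+(t::real). ennreal ?C * indicator {0..1} t \<partial>lborel)"
    unfolding hlength_def
    by (intro nn_integral_mono) (simp add: hdens_model_path_le assms indicator_def)
  also have "\<dots> = ennreal ?C" by (simp add: nn_integral_cmult_indicator)
  finally show "hlength (model_path x ?a) < \<infinity>" by (simp add: le_less_trans)
qed

definition hcompress :: "real \<Rightarrow> (real \<Rightarrow> real \<times> real) \<Rightarrow> real \<Rightarrow> real \<times> real" where
  "hcompress c g t = (c * fst (g t), snd (g t))"

lemma hcompress_has_vector_derivative: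
  assumes "(g has_vector_derivative D) (at t)"
  shows "(hcompress c g has_vector_derivative (c * fst D, snd D)) (at t)"
  unfolding hcompress_def
  using has_vector_derivative_fst[OF assms] has_vector_derivative_snd[OF assms]
  by (intro has_vector_derivative_Pair) (auto intro: has_vector_derivative_mult_right)

lemma hcompress_in_hpaths:
  assumes "g \<in> hpaths p q"
  shows "hcompress c g \<in> hpaths (c * fst p, snd p) (c * fst q, snd q)"
proof -
  obtain S D where S: "finite S" and g: "continuous_on {0..1} g" "g ` {0..1} \<subseteq> HP" "g 0 = p" "g 1 = q"
    and D: "\<And>t. t \<in> {0..1} - S \<Longrightarrow> (g has_vector_derivative D t) (at t)"
      "continuous_on ({0..1} - S) D"
    using assms by (rule hpathsE) blast
  have "hcompress c g C1_differentiable_on {0..1} - S"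
    unfolding C1_differentiable_on_def
  proof (intro exI conjI ballI)
    show "continuous_on ({0..1} - S) (\<lambda>t. (c * fst (D t), snd (D t)))"
      using D(2) by (intro continuous_on_Pair continuous_on_mult_left continuous_on_fst continuous_on_snd)
    show "(hcompress c g has_vector_derivative (c * fst (D t), snd (D t))) (at t)"
      if "t \<in> {0..1} - S" for t
      using D(1)[OF that] by (rule hcompress_has_vector_derivative)
  qed
  moreover have "continuous_on {0..1} (hcompress c g)"
    unfolding hcompress_def using g(1) by (intro continuous_intros)
  ultimately have "hcompress c g piecewise_C1_differentiable_on {0..1}"
    using S unfolding piecewise_C1_differentiable_on_def by blast
  moreover have "hcompress c g ` {0..1} \<subseteq> HP"
    using g(2) by (auto simp: HP_def hcompress_def)
  ultimately show ?thesis
    using g(3,4) by (simp add: hpaths_def hcompress_def)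
qed

lemma hlength_ge_altitude_change:
  assumes g: "g \<in> hpaths p q" and t: "t \<in> {0..1}"
  shows "ennreal (2 * sqrt (1 + snd (g t)) - 2 * sqrt (1 + snd p)) \<le> hlength g"
proof -
  obtain S D where S: "finite S" and g: "continuous_on {0..1} g" "g 0 = p"
    and D: "\<And>t. t \<in> {0..1} - S \<Longrightarrow> (g has_vector_derivative D t) (at t)"
    using g by (rule hpathsE) blast
  have V: "snd (g s) \<ge> 0" if "s \<in> {0..1}" for s
    using assms(1) that by (rule hpaths_snd_nonneg)
  let ?f = "\<lambda>s. hdens (g s) (vector_derivative g (at s))"
  have "ennreal (2 * sqrt (1 + snd (g t)) - 2 * sqrt (1 + snd (g 0)))
          \<le> (\<integral>\<^sup>+s. ?f s * indicator {0..t} s \<partial>lborel)"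
  proof (rule fundamental_theorem_of_calculus_nn_integral_le[OF S])
    fix s assume "s \<in> {0<..<t} - S"
    then have s: "s \<in> {0..1} - S" using t by auto
    have pos: "0 < 1 + snd (g s)" using V s by force
    show "((\<lambda>s. 2 * sqrt (1 + snd (g s))) has_real_derivative snd (D s) / sqrt (1 + snd (g s))) (at s)"
      using has_vector_derivative_snd[OF D[OF s]] pos
      by (auto intro!: derivative_eq_intros
          simp: has_real_derivative_iff_has_vector_derivative[symmetric] field_simps)
    show "ennreal \<bar>snd (D s) / sqrt (1 + snd (g s))\<bar> \<le> ?f s"
      using hdens_ge_vertical_speed[OF V, of s "D s"] s vector_derivative_at[OF D[OF s]] pos
      by (simp add: abs_div)
  next
    show "continuous_on {0..t} (\<lambda>s. 2 * sqrt (1 + snd (g s)))"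
      using continuous_on_subset[OF g(1)] t by (auto intro!: continuous_intros)
  qed (use t in simp)
  also have "\<dots> \<le> hlength g"
    unfolding hlength_def using t by (intro nn_integral_mono) (auto simp: indicator_def)
  finally show ?thesis using g(2) by simp
qed

lemma horizontal_displacement_le_nn_integral:
  assumes g: "g \<in> hpaths p q" and "0 \<le> \<beta>"
  shows "ennreal (\<beta> * (fst q - fst p))
           \<le> (\<integral>\<^sup>+t. ennreal (\<beta> * \<bar>fst (vector_derivative g (at t))\<bar>) * indicator {0..1} t \<partial>lborel)"
proof -
  obtain S D where S: "finite S" and g: "continuous_on {0..1} g" "g 0 = p" "g 1 = q"
    and D: "\<And>t. t \<in> {0..1} - S \<Longrightarrow> (g has_vector_derivative D t) (at t)"
    using g by (rule hpathsE) blast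
  have "ennreal (\<beta> * fst (g 1) - \<beta> * fst (g 0))
          \<le> (\<integral>\<^sup>+t. ennreal (\<beta> * \<bar>fst (vector_derivative g (at t))\<bar>) * indicator {0..1} t \<partial>lborel)"
  proof (rule fundamental_theorem_of_calculus_nn_integral_le[OF S])
    fix s assume "s \<in> {0<..<1} - S"
    then have s: "s \<in> {0..1} - S" by auto
    show "((\<lambda>s. \<beta> * fst (g s)) has_real_derivative \<beta> * fst (D s)) (at s)"
      using has_vector_derivative_fst[OF D[OF s]]
      by (intro DERIV_cmult) (simp add: has_real_derivative_iff_has_vector_derivative)
    show "ennreal \<bar>\<beta> * fst (D s)\<bar> \<le> ennreal (\<beta> * \<bar>fst (vector_derivative g (at s))\<bar>)"
      using vector_derivative_at[OF D[OF s]] assms(2) by (simp add: abs_mult)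
  qed (use g(1) in \<open>auto intro!: continuous_intros\<close>)
  then show ?thesis using g(2,3) by (simp add: right_diff_distrib)
qed

lemma hlength_hcompress_gain:
  assumes g: "g \<in> hpaths p q" and K: "\<And>t. t \<in> {0..1} \<Longrightarrow> sqrt (snd (g t)) \<le> K"
    and c: "0 \<le> c" "c < 1" and l: "0 < l"
  shows "hlength (hcompress c g) + ennreal ((1 - c) * l / K * (fst q - fst p))
           \<le> ennreal (1 + (1 - c) * l^2 / 2) * hlength g"
proof -
  obtain S D where S: "finite S"
    and D: "\<And>t. t \<in> {0..1} - S \<Longrightarrow> (g has_vector_derivative D t) (at t)"
    using g by (rule hpathsE) blast
  have V: "snd (g t) \<ge> 0" if "t \<in> {0..1}" for t
    using g that by (rule hpaths_snd_nonneg)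
  define \<beta> \<kappa> where "\<beta> = (1 - c) * l / K" and "\<kappa> = (1 - c) * l^2 / 2"
  have "0 \<le> K" using order_trans[OF real_sqrt_ge_zero[OF V] K, of 0] by simp
  then have \<beta>: "0 \<le> \<beta>" using c l by (simp add: \<beta>_def)
  let ?I = "\<lambda>t. indicator {0..1} t :: ennreal"
  have pointwise: "AE t in lborel.
      hdens (hcompress c g t) (vector_derivative (hcompress c g) (at t)) * ?I t
        + ennreal (\<beta> * \<bar>fst (vector_derivative g (at t))\<bar>) * ?I t
      \<le> ennreal (1 + \<kappa>) * (hdens (g t) (vector_derivative g (at t)) * ?I t)"
    using AE_not_in[OF finite_imp_null_set_lborel[OF S]]
  proof eventually_elim
    case (elim t)
    show ?case
    proof (cases "t \<in> {0..1}")
      case True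
      then have t: "t \<in> {0..1} - S" using elim by simp
      have "vector_derivative g (at t) = D t"
        using D[OF t] by (rule vector_derivative_at)
      moreover have "vector_derivative (hcompress c g) (at t) = (c * fst (D t), snd (D t))"
        using hcompress_has_vector_derivative[OF D[OF t]] by (rule vector_derivative_at)
      ultimately show ?thesis
        using True hdens_compress_gain[OF V[OF True] K[OF True] c l, of "D t"]
        unfolding hcompress_def \<beta>_def \<kappa>_def by simp
    qed simp
  qed
  have "hlength (hcompress c g) + ennreal (\<beta> * (fst q - fst p))
      \<le> hlength (hcompress c g)
           + (\<integral>\<^sup>+t. ennreal (\<beta> * \<bar>fst (vector_derivative g (at t))\<bar>) * ?I t \<partial>lborel)"
    using horizontal_displacement_le_nn_integral[OF g \<beta>] by (rule add_left_mono)
  also have "\<dots> \<le> (\<integral>\<^sup>+t. hdens (hcompress c g t) (vector_derivative (hcompress c g) (at t)) * ?I t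
                       + ennreal (\<beta> * \<bar>fst (vector_derivative g (at t))\<bar>) * ?I t \<partial>lborel)"
    unfolding hlength_def by (rule nn_integral_add_le)
  also have "\<dots> \<le> (\<integral>\<^sup>+t. ennreal (1 + \<kappa>) * (hdens (g t) (vector_derivative g (at t)) * ?I t) \<partial>lborel)"
    using pointwise by (rule nn_integral_mono_AE)
  also have "\<dots> \<le> ennreal (1 + \<kappa>) * hlength g"
    unfolding hlength_def
  proof (rule nn_integral_cmult_le)
    show "ennreal (1 + \<kappa>) \<noteq> 0" using c by (simp add: \<kappa>_def)
  qed simp
  finally show ?thesis unfolding \<beta>_def \<kappa>_def .
qed

lemma hpaths_uniform_compression_gain:
  fixes x x' v B :: real
  assumes x: "0 \<le> x" "x < x'" and B: "0 < B"
  shows "\<exists>\<delta>>0. \<forall>g\<in>hpaths (0, 1) (x', v). hlength g < ennreal B \<longrightarrow>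
           (\<exists>g'\<in>hpaths (0, 1) (x, v). hlength g' + ennreal \<delta> \<le> hlength g)"
proof -
  define c K where "c = x / x'" and "K = sqrt 2 + B / 2"
  define l where "l = x' / (K * B)"
  define \<beta> \<kappa> where "\<beta> = (1 - c) * l / K" and "\<kappa> = (1 - c) * l^2 / 2"
  have c: "0 \<le> c" "c < 1" "c * x' = x" using x by (auto simp: c_def)
  have K: "0 < K" using B by (simp add: K_def add_pos_pos)
  have l: "0 < l" using x K B by (simp add: l_def)
  have \<beta>x': "0 < \<beta> * x'" using c l K x by (simp add: \<beta>_def)
  have \<kappa>: "0 \<le> \<kappa>" using c by (simp add: \<kappa>_def)
  \<comment> \<open>\<open>l\<close> is chosen so that the loss \<open>\<kappa> B\<close> of the compression is half its gain \<open>\<beta> x'\<close>.\<close>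
  have \<kappa>B: "\<kappa> * B = \<beta> * x' / 2"
    using K B by (simp add: \<kappa>_def \<beta>_def l_def power2_eq_square field_simps)
  show ?thesis
  proof (intro exI[of _ "\<beta> * x' / 2"] conjI ballI impI)
    fix g assume g: "g \<in> hpaths (0, 1) (x', v)" and short: "hlength g < ennreal B"
    have "sqrt (snd (g t)) \<le> K" if t: "t \<in> {0..1}" for t
    proof -
      have "ennreal (2 * sqrt (1 + snd (g t)) - 2 * sqrt 2) \<le> ennreal B"
        using hlength_ge_altitude_change[OF g t] short by simp
      then have "sqrt (1 + snd (g t)) \<le> K" using B by (simp add: ennreal_le_iff2 K_def)
      moreover have "sqrt (snd (g t)) \<le> sqrt (1 + snd (g t))" by simp
      ultimately show ?thesis by linarith
    qed
    then have gain: "hlength (hcompress c g) + ennreal (\<beta> * x') \<le> ennreal (1 + \<kappa>) * hlength g"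
      using hlength_hcompress_gain[OF g _ c(1,2) l] by (simp add: \<beta>_def \<kappa>_def)
    obtain L where L: "hlength g = ennreal L" "0 \<le> L" "L < B"
      using short by (cases "hlength g" rule: ennreal_cases) (auto simp: ennreal_less_iff)
    have "ennreal (1 + \<kappa>) * hlength g \<le> ennreal (L + \<kappa> * B)"
      using L \<kappa> mult_right_mono[of L B \<kappa>] by (simp add: ennreal_mult[symmetric] algebra_simps)
    with gain have le: "hlength (hcompress c g) + ennreal (\<beta> * x') \<le> ennreal (L + \<kappa> * B)"
      by (rule order_trans)
    then obtain L' where L': "hlength (hcompress c g) = ennreal L'" "0 \<le> L'"
      by (cases "hlength (hcompress c g)" rule: ennreal_cases) (auto simp: top_unique)
    have "L' + \<beta> * x' \<le> L + \<kappa> * B"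
      using le L L' \<beta>x' \<kappa> B by (simp add: ennreal_plus[symmetric] del: ennreal_plus)
    then have "hlength (hcompress c g) + ennreal (\<beta> * x' / 2) \<le> hlength g"
      using L L' \<beta>x' \<kappa>B by (simp add: ennreal_plus[symmetric] del: ennreal_plus)
    moreover have "hcompress c g \<in> hpaths (0, 1) (x, v)"
      using hcompress_in_hpaths[OF g, of c] c(3) by simp
    ultimately show "\<exists>g'\<in>hpaths (0, 1) (x, v). hlength g' + ennreal (\<beta> * x' / 2) \<le> hlength g"
      by blast
  qed (use \<beta>x' in simp)
qed

theorem lemma2p12:
  fixes v :: real
  assumes "v \<ge> 0"
  shows "strict_mono_on {0..} (\<lambda>x. dH (0, 1) (x, v))"
proof (rule strict_mono_onI)
  fix x x' :: real assume x: "x \<in> {0..}" "x' \<in> {0..}" "x < x'"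
  define I I' where "I = (INF g\<in>hpaths (0, 1) (x, v). hlength g)"
    and "I' = (INF g\<in>hpaths (0, 1) (x', v). hlength g)"
  obtain g0 where "g0 \<in> hpaths (0, 1) (x', v)" "hlength g0 < \<infinity>"
    using hpaths_finite_length[OF assms] by blast
  then have "I' < \<infinity>" unfolding I'_def by (meson INF_lower le_less_trans)
  then obtain d where d: "I' = ennreal d" "0 \<le> d" by (cases I' rule: ennreal_cases) auto
  obtain \<delta> where \<delta>: "0 < \<delta>" and gain: "\<forall>g\<in>hpaths (0, 1) (x', v). hlength g < ennreal (d + 1) \<longrightarrow>
      (\<exists>g'\<in>hpaths (0, 1) (x, v). hlength g' + ennreal \<delta> \<le> hlength g)"
    using hpaths_uniform_compression_gain[of x x' "d + 1" v] x d(2) by auto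
  have "I + ennreal \<delta> \<le> I'"
    unfolding I_def I'_def
    by (rule INF_add_le_INF_of_uniform_gain[where B = "ennreal (d + 1)"])
      (use d gain in \<open>auto simp: I'_def[symmetric] ennreal_less_iff\<close>)
  then obtain i where "I = ennreal i" "0 \<le> i" "i + \<delta> \<le> d"
    using d \<delta> by (cases I rule: ennreal_cases) (auto simp: ennreal_plus[symmetric] top_unique simp del: ennreal_plus)
  then show "dH (0, 1) (x, v) < dH (0, 1) (x', v)"
    using d \<delta> by (simp add: dH_def I_def[symmetric] I'_def[symmetric])
qed

end
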